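(* Let $x:[t_0,t_c]\to\mathbb{R}^n$ and $u:[t_0,t_c]\to\mathbb{R}^d$ be continuous, $k_m>0$, and let $m:[t_0,t_c]\to\mathbb{R}^{n\times n(n+d)}$ solve $\dot m=Y(x(t),u(t))-k_m m$, $m(t_0)=0$. Let $t_0\le t_{w_1}<\dots<t_{w_p}=t_c$ with $p\ge n+d$, $m_j=m(t_{w_j})$ and $M=[m_1^T,\dots,m_p^T]^T\in\mathbb{R}^{np\times n(n+d)}$. If $\operatorname{rank}(M)=n(n+d)$, then the signal $w(t)=[x(t)^T,u(t)^T]^T$ is exciting over $[t_0,t_c]$, i.e. there is $\alpha>0$ with $\int_{t_0}^{t_c}w(\tau)w(\tau)^T\,d\tau\ge\alpha I_{n+d}$.
   Context: $Y(x,u)=[I_n\otimes x^T,\ I_n\otimes u^T]\in\mathbb{R}^{n\times n(n+d)}$. A bounded vector signal $w(t)$ is called exciting over an interval $[t,t+T]$, $T>0$, if there is $\alpha>0$ with $\int_t^{t+T}w(\tau)w(\tau)^T\,d\tau\ge\alpha I$ (matrix inequality in the positive semidefinite order). *)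

theory Defs
  imports "HOL-Analysis.Analysis"
begin

definition stackw :: "real^'n \<Rightarrow> real^'d \<Rightarrow> real^('n + 'd)" where
  "stackw x u = (\<chi> k. case k of Inl i \<Rightarrow> x $ i | Inr j \<Rightarrow> u $ j)"

text \<open>Regressor Y(x,u) = [I_n (x) x^T, I_n (x) u^T], an n x n(n+d) matrix.
  Columns are indexed by pairs (j,k) with j in 'n and k in 'n + 'd; entry (i,(j,k)) is
  delta_ij * w_k (a column permutation of the block form, irrelevant for rank).\<close>
definition Yreg :: "real^'n \<Rightarrow> real^'d \<Rightarrow> real^('n \<times> ('n + 'd))^'n" where
  "Yreg x u = (\<chi> i. \<chi> c. if i = fst c then stackw x u $ snd c else 0)"

definition outer :: "real^'a \<Rightarrow> real^'a^'a" where
  "outer w = (\<chi> i j. w $ i * w $ j)"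

definition loewner_le :: "real^'a^'a \<Rightarrow> real^'a^'a \<Rightarrow> bool" where
  "loewner_le A B \<longleftrightarrow> (\<forall>v. 0 \<le> v \<bullet> ((B - A) *v v))"

end

theory Submission
  imports Defs
begin

text \<open>If some direction \<open>v \<noteq> 0\<close> were not excited, i.e. \<open>v \<bullet> w \<equiv> 0\<close> on \<open>[t\<^sub>0, t\<^sub>c]\<close>, then
  for every row index \<open>j\<close> the vector \<open>c\<close> carrying \<open>v\<close> in block \<open>j\<close> satisfies \<open>Y(x,u) c = 0\<close>.
  Hence \<open>f = m c\<close> solves \<open>f' = -k\<^sub>m f\<close>, \<open>f(t\<^sub>0) = 0\<close>, so \<open>f \<equiv> 0\<close> and \<open>c \<noteq> 0\<close> lies in the kernel
  of the stacked matrix \<open>M\<close>, contradicting full column rank. So the Gram matrix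
  \<open>\<integral> w w\<^sup>T\<close> is positive definite, and its least value on the unit sphere is the
  required \<open>\<alpha>\<close>.\<close>

lemma inner_outer: "v \<bullet> (outer w *v v) = (v \<bullet> w)\<^sup>2" for v w :: "real^'a"
  by (simp add: outer_def matrix_vector_mult_def inner_vec_def power2_eq_square
      sum_distrib_left sum_distrib_right mult_ac sum_product)

lemma continuous_on_stackw:
  fixes x :: "'t::topological_space \<Rightarrow> real^'n" and u :: "'t \<Rightarrow> real^'d"
  assumes "continuous_on S x" "continuous_on S u"
  shows "continuous_on S (\<lambda>t. stackw (x t) (u t))"
  unfolding stackw_def
proof (intro continuous_on_vec_lambda)
  fix k :: "'n + 'd"
  show "continuous_on S (\<lambda>t. case k of Inl i \<Rightarrow> x t $ i | Inr j \<Rightarrow> u t $ j)"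
    by (cases k) (auto intro!: continuous_intros assms)
qed

lemma continuous_on_outer:
  assumes "continuous_on S w"
  shows "continuous_on S (\<lambda>t. outer (w t))"
  unfolding outer_def by (intro continuous_intros assms)

lemma bounded_linear_matrix_vector_mult_left: "bounded_linear (\<lambda>A::real^'n^'m. A *v c)"
  unfolding linear_conv_bounded_linear[symmetric]
  by (rule linearI) (simp_all add: matrix_vector_mult_add_rdistrib scaleR_matrix_vector_assoc)

lemma bounded_linear_quadratic_form: "bounded_linear (\<lambda>A::real^'a^'a. v \<bullet> (A *v v))"
  using bounded_linear_compose[OF bounded_linear_inner_right bounded_linear_matrix_vector_mult_left] .

lemma quadratic_form_integral_outer:
  fixes w :: "real \<Rightarrow> real^'a"
  assumes "continuous_on {a..b} w"
  shows "v \<bullet> (integral {a..b} (\<lambda>t. outer (w t)) *v v) = integral {a..b} (\<lambda>t. (v \<bullet> w t)\<^sup>2)"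
proof -
  have "(\<lambda>t. outer (w t)) integrable_on {a..b}"
    by (intro integrable_continuous_interval continuous_on_outer assms)
  from integral_linear[OF this bounded_linear_quadratic_form]
  show ?thesis by (simp add: o_def inner_outer)
qed

lemma exists_loewner_le_scaled_identity:
  fixes G :: "real^'a^'a"
  assumes posdef: "\<And>v. v \<noteq> 0 \<Longrightarrow> 0 < v \<bullet> (G *v v)"
  shows "\<exists>\<alpha>>0. loewner_le (\<alpha> *\<^sub>R mat 1) G"
proof -
  define q where "q v = v \<bullet> (G *v v)" for v
  have q_scale: "q (c *\<^sub>R v) = c\<^sup>2 * q v" for c v
    by (simp add: q_def matrix_vector_mult_scaleR power2_eq_square)
  have "axis undefined 1 \<in> sphere (0::real^'a) 1"
    by simp
  moreover have "continuous_on (sphere 0 1) q"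
    unfolding q_def by (intro continuous_intros)
  ultimately obtain v0 where v0: "v0 \<in> sphere 0 1" and min: "\<And>y. y \<in> sphere 0 1 \<Longrightarrow> q v0 \<le> q y"
    using continuous_attains_inf[OF compact_sphere] by blast
  have "v0 \<noteq> 0"
    using v0 by auto
  then have "q v0 > 0"
    using posdef by (simp add: q_def)
  moreover have "q v0 * (norm v)\<^sup>2 \<le> q v" for v
  proof (cases "v = 0")
    case False
    then have "q v0 \<le> q ((1 / norm v) *\<^sub>R v)"
      by (intro min) simp
    then show ?thesis
      using False by (simp add: q_scale power2_eq_square field_simps)
  qed (simp add: q_def)
  then have "loewner_le (q v0 *\<^sub>R mat 1) G"
    by (simp add: loewner_le_def q_def matrix_vector_mult_diff_rdistrib inner_diff_right
        scaleR_matrix_vector_assoc[symmetric] power2_norm_eq_inner)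
  ultimately show ?thesis
    by blast
qed

lemma linear_decay_vanishes:
  fixes f :: "real \<Rightarrow> 'a::real_normed_vector"
  assumes deriv: "\<And>t. t \<in> {a..b} \<Longrightarrow> (f has_vector_derivative - k *\<^sub>R f t) (at t within {a..b})"
    and init: "f a = 0"
    and t: "t \<in> {a..b}"
  shows "f t = 0"
proof -
  have "((\<lambda>s. exp (k * s) *\<^sub>R f s) has_vector_derivative
      exp (k * s) *\<^sub>R (- k *\<^sub>R f s) + (exp (k * s) * k) *\<^sub>R f s) (at s within {a..b})"
    if "s \<in> {a..b}" for s
    by (intro has_vector_derivative_scaleR deriv that) (auto intro!: derivative_eq_intros)
  then have "((\<lambda>s. exp (k * s) *\<^sub>R f s) has_derivative (\<lambda>h. 0)) (at s within {a..b})"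
    if "s \<in> {a..b}" for s
    using that by (simp add: algebra_simps has_vector_derivative_def)
  then obtain c where "\<forall>s\<in>{a..b}. exp (k * s) *\<^sub>R f s = c"
    using has_derivative_zero_constant[OF convex_closed_interval(1)] by blast
  then have "exp (k * t) *\<^sub>R f t = exp (k * a) *\<^sub>R f a"
    using t by auto
  then show ?thesis
    using init by simp
qed

definition block_vec :: "'n::finite \<Rightarrow> real^'k \<Rightarrow> real^('n \<times> 'k)" where
  "block_vec j v = (\<chi> q. if fst q = j then v $ snd q else 0)"

lemma block_vec_eq_0_iff [simp]: "block_vec j v = 0 \<longleftrightarrow> v = 0"
  by (auto simp: block_vec_def vec_eq_iff)

lemma Yreg_mult_block_vec:
  "Yreg x u *v block_vec j v = (\<chi> i. if i = j then stackw x u \<bullet> v else 0)"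
proof -
  have "(\<Sum>c\<in>UNIV. (if i = fst c then stackw x u $ snd c else 0) * block_vec j v $ c)
      = (\<Sum>(a, k)\<in>UNIV \<times> UNIV. if a = i \<and> a = j then stackw x u $ k * v $ k else 0)" for i
    by (auto simp: block_vec_def UNIV_Times_UNIV[symmetric] simp del: UNIV_Times_UNIV
        intro!: sum.cong)
  also have "\<dots> i = (if i = j then stackw x u \<bullet> v else 0)" for i
    unfolding UNIV_Times_UNIV[symmetric] sum.cartesian_product[symmetric]
    by (cases "i = j") (subst sum.swap, simp add: inner_vec_def, auto intro!: sum.neutral)
  finally show ?thesis
    by (simp add: Yreg_def matrix_vector_mult_def vec_eq_iff)
qed

lemma filtered_regressor_mult_block_vec_eq_0:
  fixes m :: "real \<Rightarrow> real^('n::finite \<times> ('n + 'd::finite))^'n"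
  assumes ode: "\<And>t. t \<in> {t0..tc} \<Longrightarrow>
        (m has_vector_derivative (Yreg (x t) (u t) - km *\<^sub>R m t)) (at t within {t0..tc})"
    and m0: "m t0 = 0"
    and unexcited: "\<And>t. t \<in> {t0..tc} \<Longrightarrow> stackw (x t) (u t) \<bullet> v = 0"
    and t: "t \<in> {t0..tc}"
  shows "m t *v block_vec j v = 0"
proof (rule linear_decay_vanishes[where f = "\<lambda>t. m t *v block_vec j v", OF _ _ t])
  fix s assume s: "s \<in> {t0..tc}"
  have "Yreg (x s) (u s) *v block_vec j v = 0"
    using unexcited[OF s] by (simp add: Yreg_mult_block_vec vec_eq_iff)
  then have decay: "(Yreg (x s) (u s) - km *\<^sub>R m s) *v block_vec j v = - km *\<^sub>R (m s *v block_vec j v)"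
    by (simp add: matrix_vector_mult_diff_rdistrib scaleR_matrix_vector_assoc[symmetric])
  show "((\<lambda>t. m t *v block_vec j v) has_vector_derivative
      - km *\<^sub>R (m s *v block_vec j v)) (at s within {t0..tc})"
    using bounded_linear.has_vector_derivative[OF
        bounded_linear_matrix_vector_mult_left[of "block_vec j v"] ode[OF s]]
    unfolding decay .
qed (simp add: m0)

lemma full_rank_mult_eq_0_iff:
  fixes A :: "real^'n^'m"
  assumes "rank A = CARD('n)"
  shows "A *v c = 0 \<longleftrightarrow> c = 0"
  using assms matrix_nonfull_linear_equations_eq[of A] by auto

lemma unexcited_direction_eq_0:
  fixes m :: "real \<Rightarrow> real^('n::finite \<times> ('n + 'd::finite))^'n"
    and tw :: "'p::finite \<Rightarrow> real"
  assumes ode: "\<And>t. t \<in> {t0..tc} \<Longrightarrow>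
        (m has_vector_derivative (Yreg (x t) (u t) - km *\<^sub>R m t)) (at t within {t0..tc})"
    and m0: "m t0 = 0"
    and tw_range: "\<And>j. t0 \<le> tw j \<and> tw j \<le> tc"
    and rk: "rank ((\<chi> c. m (tw (fst c)) $ snd c) :: real^('n \<times> ('n + 'd))^('p \<times> 'n))
             = CARD('n \<times> ('n + 'd))"
    and unexcited: "\<And>t. t \<in> {t0..tc} \<Longrightarrow> stackw (x t) (u t) \<bullet> v = 0"
  shows "v = 0"
proof -
  have "(\<chi> c. m (tw (fst c)) $ snd c) *v block_vec (undefined :: 'n) v = 0"
    using filtered_regressor_mult_block_vec_eq_0[OF ode m0 unexcited] tw_range
    by (simp add: matrix_vector_mult_def vec_eq_iff)
  then show ?thesis
    by (simp add: full_rank_mult_eq_0_iff[OF rk])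
qed

theorem lemma1:
  fixes x :: "real \<Rightarrow> real^'n" and u :: "real \<Rightarrow> real^'d"
    and m :: "real \<Rightarrow> real^('n \<times> ('n + 'd))^'n"
    and km t0 tc :: real and tw :: "'p::finite \<Rightarrow> real"
  assumes cx: "continuous_on {t0..tc} x"
    and cu: "continuous_on {t0..tc} u"
    and km: "km > 0"
    and ode: "\<And>t. t \<in> {t0..tc} \<Longrightarrow>
        (m has_vector_derivative (Yreg (x t) (u t) - km *\<^sub>R m t)) (at t within {t0..tc})"
    and m0: "m t0 = 0"
    and tw_inj: "inj tw"
    and tw_range: "\<And>j. t0 \<le> tw j \<and> tw j \<le> tc"
    and tw_last: "\<exists>j. tw j = tc"
    and p_ge: "CARD('p) \<ge> CARD('n) + CARD('d)"
    and rk: "rank ((\<chi> c. m (tw (fst c)) $ snd c) :: real^('n \<times> ('n + 'd))^('p \<times> 'n))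
             = CARD('n \<times> ('n + 'd))"
  shows "\<exists>\<alpha>>0. loewner_le (\<alpha> *\<^sub>R mat 1)
           (integral {t0..tc} (\<lambda>\<tau>. outer (stackw (x \<tau>) (u \<tau>))))"
proof (rule exists_loewner_le_scaled_identity)
  define w where "w \<tau> = stackw (x \<tau>) (u \<tau>)" for \<tau>
  have cw: "continuous_on {t0..tc} w"
    unfolding w_def using cx cu by (rule continuous_on_stackw)
  have "t0 < tc"
  proof (rule ccontr)
    assume "\<not> t0 < tc"
    then have "tw p = t0" for p
      using tw_range[of p] by linarith
    then have "(\<chi> c. m (tw (fst c)) $ snd c) = 0"
      using m0 by (simp add: vec_eq_iff)
    then show False
      using full_rank_mult_eq_0_iff[OF rk, of "axis undefined 1"] by simp
  qed
  fix v :: "real^('n + 'd)"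
  assume "v \<noteq> 0"
  have cq: "continuous_on {t0..tc} (\<lambda>\<tau>. (v \<bullet> w \<tau>)\<^sup>2)"
    by (intro continuous_intros cw)
  have "0 \<le> integral {t0..tc} (\<lambda>\<tau>. (v \<bullet> w \<tau>)\<^sup>2)"
    by (rule integral_nonneg[OF integrable_continuous_interval[OF cq]]) simp
  moreover have "integral {t0..tc} (\<lambda>\<tau>. (v \<bullet> w \<tau>)\<^sup>2) \<noteq> 0"
  proof
    assume "integral {t0..tc} (\<lambda>\<tau>. (v \<bullet> w \<tau>)\<^sup>2) = 0"
    then have "stackw (x \<tau>) (u \<tau>) \<bullet> v = 0" if "\<tau> \<in> {t0..tc}" for \<tau>
      using integral_eq_0_iff[OF cq \<open>t0 < tc\<close>] that by (simp add: w_def inner_commute)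
    with \<open>v \<noteq> 0\<close> show False
      using unexcited_direction_eq_0[OF ode m0 tw_range rk] by blast
  qed
  ultimately show "0 < v \<bullet> (integral {t0..tc} (\<lambda>\<tau>. outer (stackw (x \<tau>) (u \<tau>))) *v v)"
    using quadratic_form_integral_outer[OF cw, of v] by (simp add: w_def)
qed

end
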